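(* Let $\mathbf{G}$ be a labeled multilayer directed network (as defined in the context) on node set $\mathcal{V}=\{v_1,\dots,v_n\}$ with label set $\{C_1,\dots,C_h\}$ and attractiveness values $A_{i,l}$ such that, for each $l$, the values $A_{1,l},\dots,A_{n,l}$ are pairwise distinct. Suppose that $\mathbf{G}$ is extremal, i.e. $P(\mathbf{G})=\min_{\mathbf{H}\in\mathcal{R}(\mathbf{G})}P(\mathbf{H})$ or $P(\mathbf{G})=\max_{\mathbf{H}\in\mathcal{R}(\mathbf{G})}P(\mathbf{H})$. Let $E$ be a nonempty subset of the edge set $\mathcal{E}$ of $\mathbf{G}$ such that all edges of $E$ lie in the same layer $\mathbf{G}_l$ (i.e. $C_l\in\mathcal{C}(e)$ for every $e\in E$). Then there exists a node $v\in\lceil E\rceil_{tar}$ that has no $(2,\mathbf{G})$-follower in $\lceil E\rceil_{src}$.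
   Context: A labeled multilayer directed network $\mathbf{G}=(\mathcal{V},\mathcal{E})$ is a finite simple directed graph (no self-loops, no multiple edges) on nodes $\mathcal{V}=\{v_1,\dots,v_n\}$ in which each edge $v_i\to v_j\in\mathcal{E}$ carries a nonempty label set $\mathcal{C}(i,j)\subseteq\{C_1,\dots,C_h\}$; an ordered pair $(v_i,v_j)$ is an edge iff $\mathcal{C}(i,j)\neq\emptyset$. The $l$-th layer $\mathbf{G}_l=(\mathcal{V}_l,\mathcal{E}_l)$ consists of all edges with $C_l\in\mathcal{C}(i,j)$ and their endpoints. Each node $v_i$ has, for each $l$, an attractiveness $A_{i,l}\ge 0$; let $A_{\max,l}=\max_i A_{i,l}$. The potential energy of $v_i$ in layer $l$ is $P_l(i)=\sum_{j=1}^n (A_{\max,l}-A_{j,l})\,\chi(v_i\to v_j\in\mathcal{E}_l)$, and the total potential energy is $P(\mathbf{G})=\sum_{i=1}^n\sum_{l=1}^h P_l(i)$. A rewiring move replaces, for some layer $l$ and some edge $v_j\to v_k\in\mathcal{E}_l$, the layer-$l$ edge $v_j\to v_k$ by a layer-$l$ edge $v_j\to v_w$ with $w\neq j$ and $v_j\to v_w\notin\mathcal{E}_l$ (i.e. $C_l$ is removed from $\mathcal{C}(j,k)$ and added to $\mathcal{C}(j,w)$; the edge $v_j\to v_k$ disappears if its label set becomes empty, and $v_j\to v_w$ is created if it did not exist). $\mathcal{R}(\mathbf{G})$ denotes the set of all labeled multilayer networks (same nodes, same attractiveness values) obtainable from $\mathbf{G}$ by finite sequences of rewiring moves (including $\mathbf{G}$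 itself). For an edge set $E$, $\lceil E\rceil_{src}$ (resp. $\lceil E\rceil_{tar}$) is the set of source (resp. target) nodes of edges of $E$. A node $v_i$ is a $(2,\mathbf{G})$-follower of $v_j$ if the directed shortest-path distance from $v_i$ to $v_j$ in $\mathbf{G}$ (ignoring labels) equals exactly $2$. *)

theory Defs
  imports Complex_Main
begin

text \<open>Nodes are the elements of a finite type 'v, labels (layers) the elements of a
finite type 'l. A labeled multilayer network is given by its label-set function
C :: 'v => 'v => 'l set; (i,j) is an edge iff C i j is nonempty.\<close>

definition simple_net :: "('v \<Rightarrow> 'v \<Rightarrow> 'l set) \<Rightarrow> bool" where
  "simple_net C \<longleftrightarrow> (\<forall>i. C i i = {})"

definition edges :: "('v \<Rightarrow> 'v \<Rightarrow> 'l set) \<Rightarrow> ('v \<times> 'v) set" where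
  "edges C = {(i, j). C i j \<noteq> {}}"

definition Amax :: "('v::finite \<Rightarrow> 'l \<Rightarrow> real) \<Rightarrow> 'l \<Rightarrow> real" where
  "Amax A l = Max (range (\<lambda>i. A i l))"

definition pot_layer :: "('v::finite \<Rightarrow> 'l \<Rightarrow> real) \<Rightarrow> ('v \<Rightarrow> 'v \<Rightarrow> 'l set) \<Rightarrow> 'l \<Rightarrow> 'v \<Rightarrow> real" where
  "pot_layer A C l i = (\<Sum>j\<in>UNIV. (Amax A l - A j l) * (if l \<in> C i j then 1 else 0))"

definition total_pot :: "('v::finite \<Rightarrow> 'l::finite \<Rightarrow> real) \<Rightarrow> ('v \<Rightarrow> 'v \<Rightarrow> 'l set) \<Rightarrow> real" where
  "total_pot A C = (\<Sum>i\<in>UNIV. \<Sum>l\<in>UNIV. pot_layer A C l i)"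

definition rewire_step :: "('v \<Rightarrow> 'v \<Rightarrow> 'l set) \<Rightarrow> ('v \<Rightarrow> 'v \<Rightarrow> 'l set) \<Rightarrow> bool" where
  "rewire_step C C' \<longleftrightarrow> (\<exists>l j k w. l \<in> C j k \<and> w \<noteq> j \<and> l \<notin> C j w \<and>
      C' = (\<lambda>a b. if a = j \<and> b = k then C j k - {l}
                   else if a = j \<and> b = w then insert l (C j w)
                   else C a b))"

definition rewirings :: "('v \<Rightarrow> 'v \<Rightarrow> 'l set) \<Rightarrow> ('v \<Rightarrow> 'v \<Rightarrow> 'l set) set" where
  "rewirings C = {C'. rewire_step\<^sup>*\<^sup>* C C'}"

definition dist_eq :: "('v \<Rightarrow> 'v \<Rightarrow> 'l set) \<Rightarrow> 'v \<Rightarrow> 'v \<Rightarrow> nat \<Rightarrow> bool" where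
  "dist_eq C u v k \<longleftrightarrow> (u, v) \<in> edges C ^^ k \<and> (\<forall>m<k. (u, v) \<notin> edges C ^^ m)"

definition follower2 :: "('v \<Rightarrow> 'v \<Rightarrow> 'l set) \<Rightarrow> 'v \<Rightarrow> 'v \<Rightarrow> bool" where
  "follower2 C u v \<longleftrightarrow> dist_eq C u v 2"

end

theory Submission
  imports Defs
begin

text \<open>Suppose every target v of E has a 2-follower u among the sources, and let
u \<rightarrow> t be an edge of E. As u is not adjacent to v, moving the layer-l edge u \<rightarrow> t to
u \<rightarrow> v is a legal rewiring, and it changes the potential by A t l - A v l, where t \<noteq> v
is again a target. For the target v of largest (if G is minimal) or smallest (if G
is maximal) attractiveness, distinctness makes this change strictly negative
(resp. positive), contradicting extremality.\<close>

definition rewire :: "'l \<Rightarrow> 'v \<Rightarrow> 'v \<Rightarrow> 'v \<Rightarrow> ('v \<Rightarrow> 'v \<Rightarrow> 'l set) \<Rightarrow> ('v \<Rightarrow> 'v \<Rightarrow> 'l set)" where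
  "rewire l j k w C = (\<lambda>a b. if a = j \<and> b = k then C j k - {l}
                            else if a = j \<and> b = w then insert l (C j w)
                            else C a b)"

lemma rewire_in_rewirings:
  assumes "l \<in> C j k" and "w \<noteq> j" and "l \<notin> C j w"
  shows "rewire l j k w C \<in> rewirings C"
proof -
  have "rewire_step C (rewire l j k w C)"
    unfolding rewire_step_def rewire_def using assms by blast
  then show ?thesis
    by (simp add: rewirings_def)
qed

lemma pot_layer_rewire_other:
  assumes "i \<noteq> j \<or> l' \<noteq> l" and "k \<noteq> w"
  shows "pot_layer A (rewire l j k w C) l' i = pot_layer A C l' i"
  using assms unfolding pot_layer_def rewire_def by (intro sum.cong) auto

lemma pot_layer_rewire_same:
  fixes C :: "'v::finite \<Rightarrow> 'v \<Rightarrow> 'l set"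
  assumes "l \<in> C j k" and "l \<notin> C j w" and "k \<noteq> w"
  shows "pot_layer A (rewire l j k w C) l j = pot_layer A C l j + A k l - A w l"
proof -
  define f where "f b = Amax A l - A b l" for b
  have indicator: "(if l \<in> rewire l j k w C j b then 1 else 0 :: real)
      = (if l \<in> C j b then 1 else 0) - (if b = k then 1 else 0) + (if b = w then 1 else 0)" for b
    using assms by (auto simp: rewire_def)
  have "pot_layer A (rewire l j k w C) l j
      = (\<Sum>b\<in>UNIV. f b * (if l \<in> C j b then 1 else 0))
        - (\<Sum>b\<in>UNIV. f b * (if b = k then 1 else 0)) + (\<Sum>b\<in>UNIV. f b * (if b = w then 1 else 0))"
    unfolding pot_layer_def indicator f_def
    by (simp add: ring_distribs sum.distrib sum_subtractf)
  also have "\<dots> = pot_layer A C l j - f k + f w"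
    by (simp add: pot_layer_def f_def if_distrib cong: if_cong)
  finally show ?thesis
    by (simp add: f_def)
qed

lemma total_pot_rewire:
  fixes C :: "'v::finite \<Rightarrow> 'v \<Rightarrow> 'l::finite set"
  assumes "l \<in> C j k" and "l \<notin> C j w" and "k \<noteq> w"
  shows "total_pot A (rewire l j k w C) = total_pot A C + A k l - A w l"
proof -
  let ?H = "rewire l j k w C"
  have "pot_layer A ?H l' i - pot_layer A C l' i
      = (if l' = l then if i = j then A k l - A w l else 0 else 0)" for i l'
  proof (cases "i = j \<and> l' = l")
    case True
    then show ?thesis
      using pot_layer_rewire_same[of l C j k w A] assms by simp
  next
    case False
    then show ?thesis
      using pot_layer_rewire_other[of i j l' l k w A C] assms by auto
  qed
  then have "total_pot A ?H - total_pot A C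
      = (\<Sum>i\<in>UNIV. \<Sum>l'\<in>UNIV. if l' = l then if i = j then A k l - A w l else 0 else 0)"
    unfolding total_pot_def sum_subtractf[symmetric] by (simp only:)
  also have "\<dots> = A k l - A w l"
    by (simp add: sum.delta)
  finally show ?thesis
    by simp
qed

lemma follower2_not_adjacent:
  assumes "follower2 C u v"
  shows "C u v = {}" and "u \<noteq> v"
proof -
  have shorter: "\<forall>m<2. (u, v) \<notin> edges C ^^ m"
    using assms unfolding follower2_def dist_eq_def by blast
  have "(u, v) \<notin> edges C ^^ 1" and "(u, v) \<notin> edges C ^^ 0"
    using shorter[rule_format, of 1] shorter[rule_format, of 0] by simp_all
  then show "C u v = {}" and "u \<noteq> v"
    by (auto simp: edges_def)
qed

lemma rewiring_towards_follower2_target: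
  fixes C :: "'v::finite \<Rightarrow> 'v \<Rightarrow> 'l::finite set"
  assumes E_layer: "\<forall>(i, j)\<in>E. l \<in> C i j"
    and "u \<in> fst ` E" and "follower2 C u v"
  shows "\<exists>t\<in>snd ` E. t \<noteq> v \<and> (\<exists>H\<in>rewirings C. total_pot A H = total_pot A C + A t l - A v l)"
proof -
  obtain t where ut: "(u, t) \<in> E"
    using assms(2) by force
  then have layer: "l \<in> C u t"
    using E_layer by blast
  note not_adj = follower2_not_adjacent[OF assms(3)]
  then have "t \<noteq> v"
    using layer by auto
  moreover have "rewire l u t v C \<in> rewirings C"
    using rewire_in_rewirings[of l C u t v] layer not_adj by auto
  moreover have "t \<in> snd ` E"
    using ut by force
  ultimately show ?thesis
    using total_pot_rewire[of l C u t v A] layer not_adj by auto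
qed

lemma finite_inj_on_strict_argmax:
  fixes a :: "'a \<Rightarrow> 'b::linorder"
  assumes "finite S" and "S \<noteq> {}" and "inj_on a S"
  obtains v where "v \<in> S" and "\<forall>t\<in>S. t \<noteq> v \<longrightarrow> a t < a v"
proof -
  obtain v where "v \<in> S" and "a v = Max (a ` S)"
    using Max_in[of "a ` S"] assms(1,2) by fastforce
  then have v: "v \<in> S" "\<forall>t\<in>S. a t \<le> a v"
    using assms(1) by simp_all
  then have "\<forall>t\<in>S. t \<noteq> v \<longrightarrow> a t < a v"
    using assms(3) by (metis inj_on_eq_iff order_le_less)
  with v(1) show thesis
    by (rule that)
qed

lemma minimum_or_maximum_as_scaled_minimum:
  fixes f :: "'a \<Rightarrow> real"
  assumes "(\<forall>x\<in>S. f c \<le> f x) \<or> (\<forall>x\<in>S. f x \<le> f c)"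
  obtains \<sigma> :: real where "\<sigma> \<noteq> 0" and "\<forall>x\<in>S. \<sigma> * f c \<le> \<sigma> * f x"
  using assms
proof
  assume "\<forall>x\<in>S. f c \<le> f x"
  then show thesis
    by (intro that[of 1]) simp_all
next
  assume "\<forall>x\<in>S. f x \<le> f c"
  then show thesis
    by (intro that[of "- 1"]) simp_all
qed

theorem lemma1:
  fixes C :: "'v::finite \<Rightarrow> 'v \<Rightarrow> 'l::finite set"
    and A :: "'v \<Rightarrow> 'l \<Rightarrow> real"
    and E :: "('v \<times> 'v) set"
    and l :: 'l
  assumes simple: "simple_net C"
    and A_nonneg: "\<And>i l. A i l \<ge> 0"
    and A_distinct: "\<And>l. inj (\<lambda>i. A i l)"
    and extremal: "(\<forall>H\<in>rewirings C. total_pot A C \<le> total_pot A H)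
                 \<or> (\<forall>H\<in>rewirings C. total_pot A H \<le> total_pot A C)"
    and E_sub: "E \<subseteq> edges C"
    and E_ne: "E \<noteq> {}"
    and E_layer: "\<forall>(i, j)\<in>E. l \<in> C i j"
  shows "\<exists>v\<in>snd ` E. \<not> (\<exists>u\<in>fst ` E. follower2 C u v)"
proof (rule ccontr)
  assume no_target: "\<not> ?thesis"
  have move: "\<exists>t\<in>snd ` E. t \<noteq> v \<and> (\<exists>H\<in>rewirings C. total_pot A H = total_pot A C + A t l - A v l)"
    if "v \<in> snd ` E" for v
  proof -
    obtain u where "u \<in> fst ` E" and "follower2 C u v"
      using no_target \<open>v \<in> snd ` E\<close> by blast
    then show ?thesis
      by (rule rewiring_towards_follower2_target[OF E_layer])
  qed
  obtain \<sigma> :: real where "\<sigma> \<noteq> 0"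
    and scaled_minimal: "\<forall>H\<in>rewirings C. \<sigma> * total_pot A C \<le> \<sigma> * total_pot A H"
    using minimum_or_maximum_as_scaled_minimum[OF extremal] by blast
  have "finite (snd ` E)" and "snd ` E \<noteq> {}" and "inj_on (\<lambda>x. \<sigma> * A x l) (snd ` E)"
    using E_ne A_distinct[of l] \<open>\<sigma> \<noteq> 0\<close> by (auto simp: inj_def inj_on_def)
  then obtain v where v: "v \<in> snd ` E"
    and greatest: "\<forall>t\<in>snd ` E. t \<noteq> v \<longrightarrow> \<sigma> * A t l < \<sigma> * A v l"
    by (rule finite_inj_on_strict_argmax)
  obtain t H where "t \<in> snd ` E" and "t \<noteq> v" and "H \<in> rewirings C"
    and H: "total_pot A H = total_pot A C + A t l - A v l"
    using move[OF v] by blast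
  have "\<sigma> * total_pot A C \<le> \<sigma> * total_pot A H"
    using scaled_minimal \<open>H \<in> rewirings C\<close> by blast
  then have "\<sigma> * A v l \<le> \<sigma> * A t l"
    unfolding H by (simp add: algebra_simps)
  moreover have "\<sigma> * A t l < \<sigma> * A v l"
    using greatest \<open>t \<in> snd ` E\<close> \<open>t \<noteq> v\<close> by blast
  ultimately show False
    by simp
qed

end
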